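(* Let $n\ge3$, let $z^\diamond\in\mathbb{R}^n$, and let $\mathcal{M}\subseteq\{1,\dots,n\}$ be a sample set that is a union of twin samples, contains $1$ and $n$, and contains a twin sample in every linear segment of $z^\diamond$. Let $A=\mathbf{I}_{\mathcal{M}}$ and $y=Az^\diamond$ (noiseless). Consider the following algorithm: (1) solve $\min_z\|Dz\|_1$ subject to $Az=y$, obtaining an optimal value $f^\star$ and an optimal solution $z^\star$; (2) define $s\in\{-1,0,+1\}^n$ by setting, for every pair of consecutive twin samples $(i-1,i)$ and $(j,j+1)$ in $\mathcal{M}$ and every $k\in\{i+1,\dots,j-1\}$, $s_k=\mathrm{sign}\big((z^\star_{j+1}-z^\star_j)-(z^\star_i-z^\star_{i-1})\big)$, and $s_k=0$ for all other $k$; (3) return $\arg\min_z s^{\mathsf{T}}z$ subject to $Az=y$ and $\|Dz\|_1\le f^\star$. Then the algorithm returns $z^\diamond$, i.e., it recovers $z^\diamond$ exactly.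
   Context: $D\in\mathbb{R}^{(n-2)\times n}$ is the second-order difference operator, $(Dz)_k=z_k-2z_{k+1}+z_{k+2}$; $\mathbf{I}_{\mathcal{M}}$ consists of the rows of the identity indexed by $\mathcal{M}$. A twin sample is a pair of consecutive indices $\{i,i+1\}\subseteq\mathcal{M}$. The corners of $z^\diamond$ are the indices $i\in\{2,\dots,n-1\}$ with $z^\diamond_{i-1}-2z^\diamond_i+z^\diamond_{i+1}\ne0$; if $c_1<\dots<c_p$ are the corners, $c_0=1$, $c_{p+1}=n$, the linear segments are the index sets $\{c_t,\dots,c_{t+1}\}$, $t=0,\dots,p$; a twin sample lies in a segment if both its indices belong to it. $\mathrm{sign}(0)=0$. *)

theory Defs
  imports Main "HOL.Real"
begin

text \<open>Vectors in R^n are functions nat => real; only the entries 1..n matter.\<close>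

definition D_l1 :: "nat \<Rightarrow> (nat \<Rightarrow> real) \<Rightarrow> real" where
  "D_l1 n z = (\<Sum>k=1..n-2. \<bar>z k - 2 * z (k+1) + z (k+2)\<bar>)"

definition meas_eq :: "nat set \<Rightarrow> (nat \<Rightarrow> real) \<Rightarrow> (nat \<Rightarrow> real) \<Rightarrow> bool" where
  "meas_eq M z y \<longleftrightarrow> (\<forall>i\<in>M. z i = y i)"

definition twin :: "nat set \<Rightarrow> nat \<Rightarrow> bool" where
  "twin M i \<longleftrightarrow> i \<in> M \<and> i + 1 \<in> M"

definition union_of_twins :: "nat set \<Rightarrow> bool" where
  "union_of_twins M \<longleftrightarrow> M = (\<Union>i\<in>{i. twin M i}. {i, i+1})"

definition corners :: "nat \<Rightarrow> (nat \<Rightarrow> real) \<Rightarrow> nat set" where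
  "corners n z = {i \<in> {2..n-1}. z (i-1) - 2 * z i + z (i+1) \<noteq> 0}"

definition linear_segment :: "nat \<Rightarrow> (nat \<Rightarrow> real) \<Rightarrow> nat set \<Rightarrow> bool" where
  "linear_segment n z S \<longleftrightarrow> (\<exists>a b. S = {a..b} \<and> a < b \<and>
      a \<in> corners n z \<union> {1, n} \<and> b \<in> corners n z \<union> {1, n} \<and>
      (\<forall>c \<in> corners n z \<union> {1, n}. \<not> (a < c \<and> c < b)))"

definition gap_pair :: "nat set \<Rightarrow> nat \<Rightarrow> nat \<Rightarrow> nat \<Rightarrow> bool" where
  "gap_pair M k i j \<longleftrightarrow> i \<ge> 2 \<and> twin M (i-1) \<and> twin M j \<and> i < j \<and>
      (\<forall>m. i < m \<and> m < j \<longrightarrow> m \<notin> M) \<and> i < k \<and> k < j"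

definition sign_vec :: "nat set \<Rightarrow> (nat \<Rightarrow> real) \<Rightarrow> nat \<Rightarrow> real" where
  "sign_vec M zs k = (if \<exists>i j. gap_pair M k i j then
      (let (i, j) = (SOME (i, j). gap_pair M k i j) in
        sgn ((zs (j+1) - zs j) - (zs i - zs (i-1))))
     else 0)"

definition inner_n :: "nat \<Rightarrow> (nat \<Rightarrow> real) \<Rightarrow> (nat \<Rightarrow> real) \<Rightarrow> real" where
  "inner_n n s z = (\<Sum>k=1..n. s k * z k)"

end

theory Submission
  imports Defs
begin

text \<open>The truth zd is certified optimal for the l1 problem by a dual vector sigma with
  |sigma| <= 1 and sigma^T D zd = ||D zd||_1 that is constant across every step not inside a twin
  sample: summation by parts turns this into sigma^T D z = sigma^T D zd for every feasible z, hence
  ||D z||_1 >= ||D zd||_1, with equality only if sigma^T D z = ||D z||_1.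
  Between consecutive twin samples zd has at most one corner, since otherwise a linear segment would
  contain no twin. So an optimal z has curvature of a single sign there, agrees with zd on the four
  bounding samples, and therefore lies on the side of zd given by that sign, strictly wherever it
  differs from zd. The sign vector s records exactly this side, so s^T z > s^T zd.\<close>

definition fwd_diff :: "(nat \<Rightarrow> real) \<Rightarrow> nat \<Rightarrow> real" where
  "fwd_diff z m = z (Suc m) - z m"

text \<open>second_diff z t is the t-th entry of D z, the curvature at the point Suc t.\<close>
definition second_diff :: "(nat \<Rightarrow> real) \<Rightarrow> nat \<Rightarrow> real" where
  "second_diff z t = fwd_diff z (Suc t) - fwd_diff z t"

lemma D_l1_second_diff: "D_l1 n z = (\<Sum>t=1..n-2. \<bar>second_diff z t\<bar>)"
  unfolding D_l1_def second_diff_def fwd_diff_def by (intro sum.cong) (auto simp: algebra_simps)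

lemma fwd_diff_uminus [simp]: "fwd_diff (\<lambda>m. - z m) t = - fwd_diff z t"
  unfolding fwd_diff_def by simp

lemma second_diff_uminus [simp]: "second_diff (\<lambda>m. - z m) t = - second_diff z t"
  unfolding second_diff_def by simp

lemma second_diff_diff: "second_diff (\<lambda>m. z m - z' m) t = second_diff z t - second_diff z' t"
  unfolding second_diff_def fwd_diff_def by simp

lemma sum_fwd_diff: "p \<le> k \<Longrightarrow> (\<Sum>m=p..<k. fwd_diff z m) = z k - z p"
  unfolding fwd_diff_def by (rule sum_Suc_diff')

lemma fwd_diff_mono_on:
  assumes "\<forall>t\<in>{a..<b}. 0 \<le> second_diff z t" "a \<le> m" "m \<le> m'" "m' \<le> b"
  shows "fwd_diff z m \<le> fwd_diff z m'"
  by (rule lift_Suc_mono_le_ivl[of "{a..<b}"]) (use assms in \<open>auto simp: second_diff_def\<close>)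

lemma above_left_tangent:
  assumes "\<forall>t\<in>{a..<k}. 0 \<le> second_diff z t" "Suc a \<le> k"
  shows "z (Suc a) + fwd_diff z a * real (k - Suc a) \<le> z k"
proof -
  have "real (k - Suc a) * fwd_diff z a = (\<Sum>m=Suc a..<k. fwd_diff z a)" by simp
  also have "\<dots> \<le> (\<Sum>m=Suc a..<k. fwd_diff z m)"
    by (intro sum_mono fwd_diff_mono_on[OF assms(1)]) auto
  also have "\<dots> = z k - z (Suc a)" using assms(2) by (rule sum_fwd_diff)
  finally show ?thesis by (simp add: algebra_simps)
qed

lemma above_right_tangent:
  assumes "\<forall>t\<in>{k..<b}. 0 \<le> second_diff z t" "k \<le> b"
  shows "z b - fwd_diff z b * real (b - k) \<le> z k"
proof -
  have "z b - z k = (\<Sum>m=k..<b. fwd_diff z m)" using assms(2) by (rule sum_fwd_diff[symmetric])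
  also have "\<dots> \<le> (\<Sum>m=k..<b. fwd_diff z b)"
    by (intro sum_mono fwd_diff_mono_on[OF assms(1)]) auto
  finally show ?thesis by (simp add: algebra_simps)
qed

text \<open>A convex sequence lies above both end tangents, while a sequence that is linear on one side of
  k meets one of them at k.\<close>
lemma convex_above_one_kink:
  assumes convex: "\<forall>t\<in>{a..<b}. 0 \<le> second_diff z t"
    and kink: "(\<forall>t\<in>{a..<k}. second_diff y t = 0) \<or> (\<forall>t\<in>{k..<b}. second_diff y t = 0)"
    and ends: "y a = z a" "y (Suc a) = z (Suc a)" "y b = z b" "y (Suc b) = z (Suc b)"
    and k: "Suc a \<le> k" "k \<le> b"
  shows "y k \<le> z k"
proof -
  have fd: "fwd_diff y a = fwd_diff z a" "fwd_diff y b = fwd_diff z b"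
    using ends unfolding fwd_diff_def by simp_all
  have zl: "z (Suc a) + fwd_diff z a * real (k - Suc a) \<le> z k"
    by (rule above_left_tangent) (use convex k in auto)
  have zr: "z b - fwd_diff z b * real (b - k) \<le> z k"
    by (rule above_right_tangent) (use convex k in auto)
  from kink show ?thesis
  proof
    assume lin: "\<forall>t\<in>{a..<k}. second_diff y t = 0"
    have "y k \<le> y (Suc a) + fwd_diff y a * real (k - Suc a)"
      using above_left_tangent[of a k "\<lambda>m. - y m"] lin k by simp
    then show ?thesis using zl fd ends by simp
  next
    assume lin: "\<forall>t\<in>{k..<b}. second_diff y t = 0"
    have "y k \<le> y b - fwd_diff y b * real (b - k)"
      using above_right_tangent[of k b "\<lambda>m. - y m"] lin k by simp
    then show ?thesis using zr fd ends by simp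
  qed
qed

lemma sum_mult_fwd_diff_telescope:
  fixes \<sigma> d :: "nat \<Rightarrow> real"
  assumes "d 1 = 0" "\<forall>t. 1 \<le> t \<and> t \<le> N \<and> d t \<noteq> 0 \<longrightarrow> \<sigma> (t-1) = \<sigma> t"
  shows "(\<Sum>t=1..N. \<sigma> t * (d (Suc t) - d t)) = \<sigma> N * d (Suc N)"
  using assms(2)
proof (induction N)
  case 0
  then show ?case using assms(1) by simp
next
  case (Suc N)
  then have "(\<Sum>t=1..Suc N. \<sigma> t * (d (Suc t) - d t))
      = \<sigma> N * d (Suc N) + \<sigma> (Suc N) * (d (Suc (Suc N)) - d (Suc N))"
    by simp
  also have "\<dots> = \<sigma> (Suc N) * d (Suc (Suc N))"
    using Suc.prems by (cases "d (Suc N) = 0") (auto simp: algebra_simps)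
  finally show ?case .
qed

definition twin_gap :: "nat set \<Rightarrow> nat \<Rightarrow> nat \<Rightarrow> bool" where
  "twin_gap M i j \<longleftrightarrow> 2 \<le> i \<and> i - 1 \<in> M \<and> i \<in> M \<and> j \<in> M \<and> Suc j \<in> M \<and> Suc i < j \<and>
     (\<forall>m. i < m \<and> m < j \<longrightarrow> m \<notin> M)"

lemma gap_pair_iff_twin_gap: "gap_pair M k i j \<longleftrightarrow> twin_gap M i j \<and> i < k \<and> k < j"
  unfolding gap_pair_def twin_gap_def twin_def by auto

lemma twin_gap_unique:
  assumes "twin_gap M i j" "twin_gap M i' j'" "i \<le> p" "p \<le> j" "i' \<le> p" "p \<le> j'"
  shows "i' = i \<and> j' = j"
proof -
  have "i' \<le> i \<and> j \<le> j'" if "twin_gap M i j" "twin_gap M i' j'" "i' \<le> j" "i \<le> j'" for i j i' j'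
  proof -
    have outside: "m \<notin> M" if "i < m" "m < j" for m
      using \<open>twin_gap M i j\<close> that unfolding twin_gap_def by blast
    have "Suc i < j" using that(1) unfolding twin_gap_def by blast
    have "i' \<in> M" "i' - 1 \<in> M" "j' \<in> M" "Suc j' \<in> M"
      using that(2) unfolding twin_gap_def by auto
    have "i' \<le> i"
    proof (rule ccontr)
      assume "\<not> i' \<le> i"
      then show False
        using outside[of i'] outside[of "i' - 1"] \<open>i' \<in> M\<close> \<open>i' - 1 \<in> M\<close> \<open>Suc i < j\<close> that(3)
        by (cases "i' < j") auto
    qed
    moreover have "j \<le> j'"
    proof (rule ccontr)
      assume "\<not> j \<le> j'"
      then show False
        using outside[of j'] outside[of "Suc j'"] \<open>j' \<in> M\<close> \<open>Suc j' \<in> M\<close> \<open>Suc i < j\<close> that(4)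
        by (cases "i < j'") auto
    qed
    ultimately show ?thesis ..
  qed
  from this[of i j i' j'] this[of i' j' i j] assms show ?thesis by auto
qed

definition gap_sign :: "(nat \<Rightarrow> real) \<Rightarrow> nat \<Rightarrow> nat \<Rightarrow> real" where
  "gap_sign z i j = sgn (fwd_diff z j - fwd_diff z (i - 1))"

lemma sign_vec_eq_gap_sign:
  assumes "meas_eq M zs zd" "twin_gap M i j" "i < k" "k < j"
  shows "sign_vec M zs k = gap_sign zd i j"
proof -
  let ?P = "\<lambda>(i, j). gap_pair M k i j"
  have "?P (i, j)" using assms gap_pair_iff_twin_gap by simp
  then have P: "?P (SOME x. ?P x)" by (rule someI)
  obtain a b where ab: "(SOME x. ?P x) = (a, b)" by fastforce
  with P have "twin_gap M a b" "a < k" "k < b" using gap_pair_iff_twin_gap by auto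
  then have "a = i \<and> b = j" using twin_gap_unique[OF assms(2)] assms(3,4) by (meson less_imp_le)
  moreover have "i - 1 \<in> M" "i \<in> M" "j \<in> M" "Suc j \<in> M" using assms(2) unfolding twin_gap_def by auto
  ultimately show ?thesis
    using assms(1,2) \<open>?P (i, j)\<close> ab
    unfolding sign_vec_def gap_sign_def fwd_diff_def meas_eq_def twin_gap_def by auto
qed

text \<open>The dual certificate of the l1 problem. It must be constant on each gap, because there a
  feasible perturbation of z is unconstrained.\<close>
definition dual_sign :: "nat set \<Rightarrow> (nat \<Rightarrow> real) \<Rightarrow> nat \<Rightarrow> real" where
  "dual_sign M z t =
    (if \<exists>i j. twin_gap M i j \<and> i \<le> Suc t \<and> Suc t \<le> j
     then (case SOME (i, j). twin_gap M i j \<and> i \<le> Suc t \<and> Suc t \<le> j of (i, j) \<Rightarrow> gap_sign z i j)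
     else sgn (second_diff z t))"

lemma dual_sign_on_gap:
  assumes "twin_gap M i j" "i \<le> Suc t" "Suc t \<le> j"
  shows "dual_sign M z t = gap_sign z i j"
proof -
  let ?P = "\<lambda>(i, j). twin_gap M i j \<and> i \<le> Suc t \<and> Suc t \<le> j"
  have "?P (i, j)" using assms by simp
  then have P: "?P (SOME x. ?P x)" by (rule someI)
  obtain a b where ab: "(SOME x. ?P x) = (a, b)" by fastforce
  with P have "a = i \<and> b = j" using twin_gap_unique[OF assms(1)] assms(2,3) by auto
  then show ?thesis using assms ab unfolding dual_sign_def by auto
qed

lemma dual_sign_mult_le_abs: "dual_sign M z t * x \<le> \<bar>x\<bar>"
  unfolding dual_sign_def gap_sign_def by (auto simp: sgn_if split: prod.split)

locale twin_sampling =
  fixes n :: nat and M :: "nat set"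
  assumes n_ge_3: "n \<ge> 3" and M_subset: "M \<subseteq> {1..n}" and M_twins: "union_of_twins M"
    and first_in_M: "1 \<in> M" and last_in_M: "n \<in> M"
begin

lemma twin_neighbour:
  assumes "m \<in> M"
  shows "Suc m \<in> M \<or> (2 \<le> m \<and> m - 1 \<in> M)"
proof -
  obtain i where i: "i \<in> M" "Suc i \<in> M" "m = i \<or> m = Suc i"
    using assms M_twins unfolding union_of_twins_def twin_def by auto
  then have "1 \<le> i" using M_subset by auto
  with i show ?thesis by auto
qed

lemma second_in_M: "2 \<in> M"
  using twin_neighbour[OF first_in_M] by (simp add: numeral_2_eq_2)

lemma penultimate_in_M: "n - 1 \<in> M"
  using twin_neighbour[OF last_in_M] M_subset by auto

lemma twin_gap_bounds: "twin_gap M i j \<Longrightarrow> 2 \<le> i \<and> Suc j \<le> n"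
  using M_subset unfolding twin_gap_def by auto

lemma twin_gap_cover:
  assumes "1 \<le> k" "k \<le> n" "k \<notin> M"
  obtains i j where "twin_gap M i j" "i < k" "k < j"
proof -
  define L where "L = {m\<in>M. m < k}"
  define R where "R = {m\<in>M. k < m}"
  define i where "i = Max L"
  define j where "j = Min R"
  have "1 \<in> L" "n \<in> R" unfolding L_def R_def
    using assms first_in_M last_in_M by (auto simp: le_less)
  moreover have "finite L" "finite R"
    unfolding L_def R_def using M_subset by (auto intro: finite_subset)
  ultimately have "i \<in> L" "j \<in> R" "\<And>m. m \<in> L \<Longrightarrow> m \<le> i" "\<And>m. m \<in> R \<Longrightarrow> j \<le> m"
    unfolding i_def j_def by (auto intro: Max_in Min_in)
  then have i: "i \<in> M" "i < k" "\<And>m. m \<in> M \<Longrightarrow> m < k \<Longrightarrow> m \<le> i"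
    and j: "j \<in> M" "k < j" "\<And>m. m \<in> M \<Longrightarrow> k < m \<Longrightarrow> j \<le> m"
    unfolding L_def R_def by auto
  have "Suc i \<notin> M"
    using i(3)[of "Suc i"] i(2) assms(3) by (cases "Suc i = k") auto
  then have "2 \<le> i" "i - 1 \<in> M" using twin_neighbour[OF i(1)] by auto
  have "\<not> (2 \<le> j \<and> j - 1 \<in> M)"
  proof
    assume left: "2 \<le> j \<and> j - 1 \<in> M"
    with assms(3) j(2) have "k < j - 1" by (cases "j - 1 = k") auto
    with left show False using j(3)[of "j - 1"] by auto
  qed
  then have "Suc j \<in> M" using twin_neighbour[OF j(1)] by auto
  have "m \<notin> M" if "i < m" "m < j" for m
    using i(3)[of m] j(3)[of m] that assms(3) by (cases m k rule: linorder_cases) auto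
  moreover have "Suc i < j"
    using i(2) j(2) assms(3) \<open>Suc i \<notin> M\<close> by (cases "Suc i = k") auto
  ultimately have "twin_gap M i j"
    unfolding twin_gap_def using \<open>2 \<le> i\<close> \<open>i - 1 \<in> M\<close> \<open>Suc j \<in> M\<close> i(1) j(1) by blast
  then show thesis using i(2) j(2) by (rule that)
qed

lemma dual_sign_constant_off_twins:
  assumes "1 \<le> t" "Suc t \<le> n" "t \<notin> M \<or> Suc t \<notin> M"
  shows "dual_sign M z (t - 1) = dual_sign M z t"
proof -
  obtain i j where "twin_gap M i j" "i \<le> t" "Suc t \<le> j"
  proof (cases "t \<in> M")
    case True
    then obtain i j where "twin_gap M i j" "i < Suc t" "Suc t < j"
      using assms twin_gap_cover[of "Suc t"] by auto
    then show thesis using that by simp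
  next
    case False
    then obtain i j where "twin_gap M i j" "i < t" "t < j"
      using assms twin_gap_cover[of t] by auto
    then show thesis using that by simp
  qed
  then show ?thesis using dual_sign_on_gap[of M i j] assms(1) by simp
qed

lemma weighted_curvature_eq:
  assumes \<sigma>: "\<forall>t. 1 \<le> t \<and> Suc t \<le> n \<and> (t \<notin> M \<or> Suc t \<notin> M) \<longrightarrow> \<sigma> (t - 1) = \<sigma> t"
    and "meas_eq M z z'"
  shows "(\<Sum>t=1..n-2. \<sigma> t * second_diff z t) = (\<Sum>t=1..n-2. \<sigma> t * second_diff z' t)"
proof -
  define w where "w m = z m - z' m" for m
  have w0: "w m = 0" if "m \<in> M" for m using assms(2) that unfolding meas_eq_def w_def by simp
  have "(\<Sum>t=1..n-2. \<sigma> t * second_diff w t) = \<sigma> (n-2) * fwd_diff w (Suc (n-2))"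
    unfolding second_diff_def
  proof (rule sum_mult_fwd_diff_telescope)
    show "fwd_diff w 1 = 0" using w0 first_in_M second_in_M unfolding fwd_diff_def by (simp add: numeral_2_eq_2)
    show "\<forall>t. 1 \<le> t \<and> t \<le> n - 2 \<and> fwd_diff w t \<noteq> 0 \<longrightarrow> \<sigma> (t - 1) = \<sigma> t"
      using \<sigma> w0 unfolding fwd_diff_def by force
  qed
  also have "\<dots> = 0"
  proof -
    have "Suc (n - 2) = n - 1" "Suc (n - 1) = n" using n_ge_3 by auto
    then show ?thesis using w0 last_in_M penultimate_in_M unfolding fwd_diff_def by simp
  qed
  finally have "(\<Sum>t=1..n-2. \<sigma> t * second_diff w t) = 0" .
  moreover have "(\<Sum>t=1..n-2. \<sigma> t * second_diff w t) =
      (\<Sum>t=1..n-2. \<sigma> t * second_diff z t) - (\<Sum>t=1..n-2. \<sigma> t * second_diff z' t)"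
    unfolding w_def second_diff_diff by (simp add: right_diff_distrib sum_subtractf)
  ultimately show ?thesis by simp
qed

end

lemma twin_gap_contains_no_twin:
  assumes "twin_gap M i j" "twin M s" "{s, Suc s} \<subseteq> {i..j}"
  shows False
proof -
  have "s \<in> M" "Suc s \<in> M" "i \<le> s" "Suc s \<le> j" using assms(2,3) unfolding twin_def by auto
  moreover have "Suc i < j" "\<And>m. i < m \<Longrightarrow> m < j \<Longrightarrow> m \<notin> M"
    using assms(1) unfolding twin_gap_def by auto
  ultimately show False by (cases "s = i") auto
qed

locale sampled_signal = twin_sampling +
  fixes zd :: "nat \<Rightarrow> real"
  assumes twin_in_segment: "\<forall>S. linear_segment n zd S \<longrightarrow> (\<exists>i. twin M i \<and> {i, i+1} \<subseteq> S)"
begin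

lemma corner_iff_second_diff:
  assumes "1 \<le> t" "Suc t \<le> n - 1"
  shows "Suc t \<in> corners n zd \<longleftrightarrow> second_diff zd t \<noteq> 0"
  using assms unfolding corners_def second_diff_def fwd_diff_def by (auto simp: algebra_simps)

text \<open>Two corners of zd in one gap would enclose a linear segment without a twin sample.\<close>
lemma gap_corner_unique:
  assumes gap: "twin_gap M i j" and t: "t \<in> {i-1..<j}" "t' \<in> {i-1..<j}"
    and "second_diff zd t \<noteq> 0" "second_diff zd t' \<noteq> 0"
  shows "t = t'"
proof (rule ccontr)
  have "2 \<le> i" "Suc j \<le> n" using twin_gap_bounds[OF gap] by auto
  have corner: "Suc u \<in> corners n zd" if "u \<in> {t, t'}" for u
    using that assms corner_iff_second_diff[of u] \<open>2 \<le> i\<close> \<open>Suc j \<le> n\<close> by auto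
  assume "t \<noteq> t'"
  then obtain p q where pq: "p \<in> {t, t'}" "q \<in> {t, t'}" "p < q" by (metis insertI1 insert_commute linorder_neqE_nat)
  define c where "c = (LEAST c. c \<in> corners n zd \<and> Suc p < c)"
  have c: "c \<in> corners n zd" "Suc p < c" "c \<le> Suc q"
    using LeastI[of "\<lambda>c. c \<in> corners n zd \<and> Suc p < c" "Suc q"]
      Least_le[of "\<lambda>c. c \<in> corners n zd \<and> Suc p < c" "Suc q"] corner[OF pq(2)] pq(3)
    unfolding c_def by auto
  have "linear_segment n zd {Suc p..c}"
    unfolding linear_segment_def
  proof (intro exI conjI)
    show "\<forall>d\<in>corners n zd \<union> {1, n}. \<not> (Suc p < d \<and> d < c)"
      using not_less_Least[of _ "\<lambda>c. c \<in> corners n zd \<and> Suc p < c"] c(3) pq t \<open>Suc j \<le> n\<close>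
      unfolding c_def by fastforce
  qed (use c corner[OF pq(1)] in auto)
  then obtain s where s: "twin M s" "{s, s+1} \<subseteq> {Suc p..c}" using twin_in_segment by blast
  moreover have "{Suc p..c} \<subseteq> {i..j}" using c pq t by auto
  ultimately have "{s, Suc s} \<subseteq> {i..j}" by auto
  then show False using twin_gap_contains_no_twin[OF gap s(1)] by blast
qed

lemma dual_sign_certifies:
  assumes "1 \<le> t" "t \<le> n - 2"
  shows "dual_sign M zd t * second_diff zd t = \<bar>second_diff zd t\<bar>"
proof (cases "\<exists>i j. twin_gap M i j \<and> i \<le> Suc t \<and> Suc t \<le> j")
  case False
  then show ?thesis unfolding dual_sign_def if_not_P[OF False] by (simp add: abs_sgn mult.commute)
next
  case True
  then obtain i j where gap: "twin_gap M i j" "i \<le> Suc t" "Suc t \<le> j" by blast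
  have t: "t \<in> {i-1..<j}" using gap by auto
  show ?thesis
  proof (cases "second_diff zd t = 0")
    case False
    have "fwd_diff zd j - fwd_diff zd (i - 1) = (\<Sum>u=i-1..<j. second_diff zd u)"
      unfolding second_diff_def using gap by (intro sum_Suc_diff'[symmetric]) auto
    also have "\<dots> = second_diff zd t + (\<Sum>u\<in>{i-1..<j} - {t}. second_diff zd u)"
      using t by (simp add: sum.remove)
    also have "\<dots> = second_diff zd t"
      using gap_corner_unique[OF gap(1) t] False by (subst sum.neutral) auto
    finally have "gap_sign zd i j = sgn (second_diff zd t)" unfolding gap_sign_def by simp
    then show ?thesis using dual_sign_on_gap[OF gap] by (simp add: abs_sgn mult.commute)
  qed simp
qed

lemma D_l1_excess:
  assumes "meas_eq M z zd"
  shows "D_l1 n z - D_l1 n zd = (\<Sum>t=1..n-2. \<bar>second_diff z t\<bar> - dual_sign M zd t * second_diff z t)"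
proof -
  have "D_l1 n zd = (\<Sum>t=1..n-2. dual_sign M zd t * second_diff zd t)"
    unfolding D_l1_second_diff using dual_sign_certifies by (intro sum.cong) auto
  also have "\<dots> = (\<Sum>t=1..n-2. dual_sign M zd t * second_diff z t)"
  proof -
    have "\<forall>t. 1 \<le> t \<and> Suc t \<le> n \<and> (t \<notin> M \<or> Suc t \<notin> M) \<longrightarrow> dual_sign M zd (t - 1) = dual_sign M zd t"
      using dual_sign_constant_off_twins by blast
    from weighted_curvature_eq[OF this assms] show ?thesis by simp
  qed
  finally show ?thesis unfolding D_l1_second_diff by (simp add: sum_subtractf)
qed

lemma D_l1_minimal:
  assumes "meas_eq M z zd"
  shows "D_l1 n zd \<le> D_l1 n z"
proof -
  have "0 \<le> (\<Sum>t=1..n-2. \<bar>second_diff z t\<bar> - dual_sign M zd t * second_diff z t)"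
    by (rule sum_nonneg) (simp add: dual_sign_mult_le_abs)
  then show ?thesis using D_l1_excess[OF assms] by simp
qed

lemma minimizer_curvature_sign:
  assumes "meas_eq M z zd" "D_l1 n z \<le> D_l1 n zd" "t \<in> {1..n-2}"
  shows "\<bar>second_diff z t\<bar> = dual_sign M zd t * second_diff z t"
proof -
  have nonneg: "\<forall>u\<in>{1..n-2}. 0 \<le> \<bar>second_diff z u\<bar> - dual_sign M zd u * second_diff z u"
    using dual_sign_mult_le_abs by simp
  then have "0 \<le> (\<Sum>u=1..n-2. \<bar>second_diff z u\<bar> - dual_sign M zd u * second_diff z u)"
    by (intro sum_nonneg) auto
  moreover have "(\<Sum>u=1..n-2. \<bar>second_diff z u\<bar> - dual_sign M zd u * second_diff z u) \<le> 0"
    using D_l1_excess[OF assms(1)] assms(2) by simp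
  ultimately have "(\<Sum>u=1..n-2. \<bar>second_diff z u\<bar> - dual_sign M zd u * second_diff z u) = 0"
    by linarith
  with nonneg have "\<forall>u\<in>{1..n-2}. \<bar>second_diff z u\<bar> - dual_sign M zd u * second_diff z u = 0"
    by (subst (asm) sum_nonneg_eq_0_iff) auto
  then show ?thesis using assms(3) by simp
qed

text \<open>On a gap, a minimizer has curvature of one fixed sign, so it lies on the same side of the
  (at most once bent) zd, with which it agrees on the bounding twins.\<close>
lemma gap_sign_order:
  assumes z: "meas_eq M z zd" "D_l1 n z \<le> D_l1 n zd" and gap: "twin_gap M i j" and k: "i < k" "k < j"
  defines "\<epsilon> \<equiv> gap_sign zd i j"
  shows "\<epsilon> * zd k \<le> \<epsilon> * z k \<and> (z k \<noteq> zd k \<longrightarrow> \<epsilon> * zd k < \<epsilon> * z k)"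
proof -
  have "2 \<le> i" "Suc j \<le> n" using twin_gap_bounds[OF gap] by auto
  have dual: "dual_sign M zd t = \<epsilon>" if "t \<in> {i-1..<j}" for t
    unfolding \<epsilon>_def using that \<open>2 \<le> i\<close> by (intro dual_sign_on_gap[OF gap]) auto
  have range: "t \<in> {1..n-2}" if "t \<in> {i-1..<j}" for t
    using that \<open>2 \<le> i\<close> \<open>Suc j \<le> n\<close> by auto
  have z_curv: "\<bar>second_diff z t\<bar> = \<epsilon> * second_diff z t" if "t \<in> {i-1..<j}" for t
    using minimizer_curvature_sign[OF z range[OF that]] dual[OF that] by simp
  have one_side: "(\<forall>t\<in>{i-1..<k}. second_diff zd t = 0) \<or> (\<forall>t\<in>{k..<j}. second_diff zd t = 0)"
  proof (rule ccontr)
    assume "\<not> ?thesis"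
    then obtain t t' where "t \<in> {i-1..<k}" "t' \<in> {k..<j}" "second_diff zd t \<noteq> 0" "second_diff zd t' \<noteq> 0"
      by auto
    then show False using gap_corner_unique[OF gap, of t t'] k by auto
  qed
  have ends: "zd (i - 1) = z (i - 1)" "zd i = z i" "zd j = z j" "zd (Suc j) = z (Suc j)"
    using z(1) gap unfolding meas_eq_def twin_gap_def by auto
  have bounds: "Suc (i - 1) \<le> k" "k \<le> j" using k \<open>2 \<le> i\<close> by auto
  have sgn_\<epsilon>: "\<epsilon> = 0 \<or> \<epsilon> = 1 \<or> \<epsilon> = -1" unfolding \<epsilon>_def gap_sign_def by (simp add: sgn_if)
  have above: "zd k \<le> z k" if "\<epsilon> \<noteq> -1"
  proof (rule convex_above_one_kink)
    show "\<forall>t\<in>{i-1..<j}. 0 \<le> second_diff z t"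
      using z_curv sgn_\<epsilon> that by (force simp: abs_if split: if_splits)
  qed (use one_side ends bounds \<open>2 \<le> i\<close> in auto)
  have below: "z k \<le> zd k" if "\<epsilon> \<noteq> 1"
  proof -
    have "- zd k \<le> - z k"
    proof (rule convex_above_one_kink[where y = "\<lambda>m. - zd m" and z = "\<lambda>m. - z m"])
      show "\<forall>t\<in>{i-1..<j}. 0 \<le> second_diff (\<lambda>m. - z m) t"
        using z_curv sgn_\<epsilon> that by (force simp: abs_if split: if_splits)
    qed (use one_side ends bounds \<open>2 \<le> i\<close> in auto)
    then show ?thesis by simp
  qed
  from sgn_\<epsilon> show ?thesis
    using above below by (auto simp: less_le)
qed

lemma sign_objective_strict:
  assumes z: "meas_eq M z zd" "D_l1 n z \<le> D_l1 n zd" and zs: "meas_eq M zs zd"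
    and differ: "\<exists>k\<in>{1..n}. z k \<noteq> zd k"
  shows "inner_n n (sign_vec M zs) zd < inner_n n (sign_vec M zs) z"
proof -
  have le: "sign_vec M zs k * zd k \<le> sign_vec M zs k * z k \<and>
      (z k \<noteq> zd k \<longrightarrow> sign_vec M zs k * zd k < sign_vec M zs k * z k)" if k: "k \<in> {1..n}" for k
  proof (cases "k \<in> M")
    case True
    then show ?thesis using z(1) unfolding meas_eq_def by simp
  next
    case False
    obtain i j where gap: "twin_gap M i j" "i < k" "k < j"
      by (rule twin_gap_cover[of k]) (use k False in auto)
    then show ?thesis using gap_sign_order[OF z gap] sign_vec_eq_gap_sign[OF zs gap] by simp
  qed
  show ?thesis
    unfolding inner_n_def
  proof (rule sum_strict_mono_ex1)
    show "\<forall>k\<in>{1..n}. sign_vec M zs k * zd k \<le> sign_vec M zs k * z k" using le by blast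
    show "\<exists>k\<in>{1..n}. sign_vec M zs k * zd k < sign_vec M zs k * z k" using le differ by blast
  qed simp
qed

end

theorem corollary3:
  fixes n :: nat and zd zs :: "nat \<Rightarrow> real" and M :: "nat set"
  assumes "n \<ge> 3"
    and "M \<subseteq> {1..n}"
    and "union_of_twins M"
    and "1 \<in> M" and "n \<in> M"
    and "\<forall>S. linear_segment n zd S \<longrightarrow> (\<exists>i. twin M i \<and> {i, i+1} \<subseteq> S)"
    and zs_feas: "meas_eq M zs zd"
    and zs_opt: "\<forall>z. meas_eq M z zd \<longrightarrow> D_l1 n zs \<le> D_l1 n z"
  shows "meas_eq M zd zd \<and> D_l1 n zd \<le> D_l1 n zs \<and>
    (\<forall>z. meas_eq M z zd \<and> D_l1 n z \<le> D_l1 n zs \<and> (\<exists>k\<in>{1..n}. z k \<noteq> zd k) \<longrightarrow>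
       inner_n n (sign_vec M zs) zd < inner_n n (sign_vec M zs) z)"
proof -
  interpret sampled_signal n M zd
    using assms(1-6) by unfold_locales
  have zd_feas: "meas_eq M zd zd" unfolding meas_eq_def by simp
  have "D_l1 n zd = D_l1 n zs"
    using D_l1_minimal[OF zs_feas] zs_opt zd_feas by (simp add: order_antisym)
  then show ?thesis
    using zd_feas sign_objective_strict[OF _ _ zs_feas] by auto
qed

end
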